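(* Let $V$ be a finite node set with $|V|=n$ and let $E,E'$ be edge sets of simple undirected graphs on $V$ whose symmetric difference has at most $K$ edges. For an edge set $F$ let $A(F)$ be its adjacency matrix, $D(F)$ the diagonal matrix of self-loop-augmented degrees $\tilde d_v=\deg_F(v)+1$, and $\tilde A(F)=D(F)^{-1/2}(A(F)+I)D(F)^{-1/2}$. Let $\tilde d_{\min}$ and $\tilde d_{\max}$ be the minimum and maximum self-loop-augmented degrees over the graphs $(V,E)$ and $(V,E')$, and assume $\tilde d_{\max}/\tilde d_{\min}\le c$. Then \[ \|\tilde A(E')-\tilde A(E)\|_2\le C\,\frac{K}{\tilde d_{\min}}, \] where $\|\cdot\|_2$ is the spectral norm and $C$ is a constant depending only on $c$. *)

theory Defs
  imports Complex_Main
begin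

definition simple_edges :: "'a set \<Rightarrow> 'a set set \<Rightarrow> bool" where
  "simple_edges V E \<longleftrightarrow> E \<subseteq> {e. \<exists>u v. u \<in> V \<and> v \<in> V \<and> u \<noteq> v \<and> e = {u, v}}"

definition adj :: "'a set set \<Rightarrow> 'a \<Rightarrow> 'a \<Rightarrow> real" where
  "adj F u v = (if {u, v} \<in> F then 1 else 0)"

definition degree :: "'a set \<Rightarrow> 'a set set \<Rightarrow> 'a \<Rightarrow> nat" where
  "degree V F v = card {u \<in> V. {u, v} \<in> F}"

definition tdeg :: "'a set \<Rightarrow> 'a set set \<Rightarrow> 'a \<Rightarrow> nat" where
  "tdeg V F v = degree V F v + 1"

definition norm_adj :: "'a set \<Rightarrow> 'a set set \<Rightarrow> 'a \<Rightarrow> 'a \<Rightarrow> real" where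
  "norm_adj V F u v =
     (adj F u v + (if u = v then 1 else 0)) / (sqrt (real (tdeg V F u)) * sqrt (real (tdeg V F v)))"

definition spec_norm :: "'a set \<Rightarrow> ('a \<Rightarrow> 'a \<Rightarrow> real) \<Rightarrow> real" where
  "spec_norm V M = Sup {sqrt (\<Sum>u\<in>V. (\<Sum>v\<in>V. M u v * x v)^2) | x. (\<Sum>v\<in>V. (x v)^2) \<le> 1}"

end

theory Submission
  imports Defs "HOL-Analysis.L2_Norm"
begin

text \<open>
  The spectral norm is at most the sum of the absolute values of the entries. Let \<open>m\<close> and
  \<open>M\<close> be the minimum and maximum augmented degrees. An entry whose edge changed is at most
  \<open>1 / m\<close> in both matrices, and there are at most \<open>2K\<close> such entries. Every other nonzero
  entry lies on an edge or on the diagonal and changes only through the normalisation, by at most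
  \<open>(\<delta> u + \<delta> v) / (2 m\<^sup>2)\<close>, where the degree change \<open>\<delta> u\<close> is bounded by the number of
  changed edges at \<open>u\<close>, so that \<open>\<Sum> \<delta> \<le> 2K\<close>. A row has at most \<open>M\<close> such entries, so they
  contribute at most \<open>2MK / m\<^sup>2\<close>, and \<open>M \<le> c m\<close> gives the constant \<open>C = 2 (1 + c)\<close>.
\<close>

lemma abs_inverse_sqrt_diff_le:
  fixes m p q :: real
  assumes "0 < m" "m \<le> p" "m \<le> q"
  shows "\<bar>1 / sqrt q - 1 / sqrt p\<bar> \<le> \<bar>q - p\<bar> / (2 * m * sqrt m)"
proof -
  have "m \<le> sqrt p * sqrt q"
    using assms mult_mono[of "sqrt m" "sqrt p" "sqrt m" "sqrt q"] by simp
  moreover have "2 * sqrt m \<le> sqrt p + sqrt q"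
    using assms real_sqrt_le_mono[of m p] real_sqrt_le_mono[of m q] by linarith
  ultimately have "m * (2 * sqrt m) \<le> sqrt p * sqrt q * (sqrt p + sqrt q)"
    using assms by (intro mult_mono) auto
  then have den: "2 * m * sqrt m \<le> sqrt p * sqrt q * (sqrt p + sqrt q)"
    by (simp add: mult_ac)
  have "1 / b - 1 / a = (a * a - b * b) / (a * b * (a + b))" if "0 < a" "0 < b" for a b :: real
  proof -
    have "(a * a - b * b) / (a * b * (a + b)) = (a - b) * (a + b) / (a * b * (a + b))"
      by (simp add: algebra_simps)
    also have "\<dots> = (a - b) / (a * b)" using that by simp
    finally show ?thesis using that by (simp add: field_simps)
  qed
  then have "1 / sqrt q - 1 / sqrt p = (p - q) / (sqrt p * sqrt q * (sqrt p + sqrt q))"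
    using assms by simp
  then have "\<bar>1 / sqrt q - 1 / sqrt p\<bar> = \<bar>q - p\<bar> / (sqrt p * sqrt q * (sqrt p + sqrt q))"
    using assms by (simp add: abs_divide abs_minus_commute)
  also have "\<dots> \<le> \<bar>q - p\<bar> / (2 * m * sqrt m)"
    using assms den by (intro divide_left_mono) (auto intro!: mult_pos_pos add_pos_pos)
  finally show ?thesis .
qed

lemma abs_inverse_sqrt_mult_diff_le:
  fixes m p q r s :: real
  assumes "0 < m" "m \<le> p" "m \<le> q" "m \<le> r" "m \<le> s"
  shows "\<bar>1 / (sqrt q * sqrt s) - 1 / (sqrt p * sqrt r)\<bar> \<le> (\<bar>q - p\<bar> + \<bar>s - r\<bar>) / (2 * m\<^sup>2)"
proof -
  have scale: "\<bar>1 / sqrt b - 1 / sqrt a\<bar> / sqrt c \<le> \<bar>b - a\<bar> / (2 * m\<^sup>2)"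
    if "m \<le> a" "m \<le> b" "m \<le> c" for a b c
  proof -
    have "\<bar>1 / sqrt b - 1 / sqrt a\<bar> / sqrt c \<le> \<bar>b - a\<bar> / (2 * m * sqrt m) / sqrt m"
      using abs_inverse_sqrt_diff_le[of m a b] assms(1) that
      by (intro frac_le) (auto intro: divide_nonneg_nonneg)
    also have "\<dots> = \<bar>b - a\<bar> / (2 * m\<^sup>2)"
      using assms(1) by (simp add: power2_eq_square mult.assoc)
    finally show ?thesis .
  qed
  have split: "1 / (sqrt q * sqrt s) - 1 / (sqrt p * sqrt r)
      = (1 / sqrt q - 1 / sqrt p) / sqrt s + (1 / sqrt s - 1 / sqrt r) / sqrt p"
    using assms by (simp add: field_simps)
  have "\<bar>1 / (sqrt q * sqrt s) - 1 / (sqrt p * sqrt r)\<bar>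
      \<le> \<bar>(1 / sqrt q - 1 / sqrt p) / sqrt s\<bar> + \<bar>(1 / sqrt s - 1 / sqrt r) / sqrt p\<bar>"
    unfolding split by (rule abs_triangle_ineq)
  also have "\<dots> = \<bar>1 / sqrt q - 1 / sqrt p\<bar> / sqrt s + \<bar>1 / sqrt s - 1 / sqrt r\<bar> / sqrt p"
    using assms by (simp add: abs_divide)
  also have "\<dots> \<le> (\<bar>q - p\<bar> + \<bar>s - r\<bar>) / (2 * m\<^sup>2)"
    using scale[of p q s] scale[of r s p] assms by (simp add: add_divide_distrib)
  finally show ?thesis .
qed

lemma spec_norm_le_sum_abs:
  assumes "finite V"
  shows "spec_norm V M \<le> (\<Sum>u\<in>V. \<Sum>v\<in>V. \<bar>M u v\<bar>)"
  unfolding spec_norm_def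
proof (rule cSup_least)
  show "{sqrt (\<Sum>u\<in>V. (\<Sum>v\<in>V. M u v * x v)\<^sup>2) | x. (\<Sum>v\<in>V. (x v)\<^sup>2) \<le> 1} \<noteq> {}"
    by (auto intro!: exI[of _ "\<lambda>_. 0"])
next
  fix y assume "y \<in> {sqrt (\<Sum>u\<in>V. (\<Sum>v\<in>V. M u v * x v)\<^sup>2) | x. (\<Sum>v\<in>V. (x v)\<^sup>2) \<le> 1}"
  then obtain x where y: "y = sqrt (\<Sum>u\<in>V. (\<Sum>v\<in>V. M u v * x v)\<^sup>2)"
    and x: "(\<Sum>v\<in>V. (x v)\<^sup>2) \<le> 1" by blast
  define R where "R u = (\<Sum>v\<in>V. \<bar>M u v\<bar>)" for u
  have "\<bar>x v\<bar> \<le> 1" if "v \<in> V" for v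
  proof -
    have "(x v)\<^sup>2 \<le> (\<Sum>v\<in>V. (x v)\<^sup>2)" by (rule member_le_sum) (use that assms in auto)
    with x show ?thesis by (simp add: abs_square_le_1[symmetric])
  qed
  then have "\<bar>\<Sum>v\<in>V. M u v * x v\<bar> \<le> R u" for u
    unfolding R_def
    by (intro order_trans[OF sum_abs] sum_mono) (auto simp: abs_mult intro: mult_left_le)
  then have "y \<le> sqrt (\<Sum>u\<in>V. (R u)\<^sup>2)"
    unfolding y
    by (intro real_sqrt_le_mono sum_mono) (meson abs_le_square_iff abs_ge_self order_trans)
  also have "\<dots> \<le> sum R V"
    using L2_set_le_sum[of V R] by (simp add: L2_set_def R_def)
  finally show "y \<le> (\<Sum>u\<in>V. \<Sum>v\<in>V. \<bar>M u v\<bar>)" by (simp add: R_def)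
qed

lemma abs_card_Collect_diff_le:
  assumes "finite A"
  shows "\<bar>real (card {x\<in>A. P x}) - real (card {x\<in>A. Q x})\<bar> \<le> real (card {x\<in>A. P x \<noteq> Q x})"
proof -
  have "card {x\<in>A. P x} \<le> card {x\<in>A. Q x} + card {x\<in>A. P x \<noteq> Q x}" for P Q
  proof -
    have "card {x\<in>A. P x} \<le> card ({x\<in>A. Q x} \<union> {x\<in>A. P x \<noteq> Q x})"
      using assms by (intro card_mono) auto
    then show ?thesis using card_Un_le order_trans by blast
  qed
  from this[of P Q] this[of Q P] show ?thesis by (simp add: eq_commute)
qed

lemma sum_card_neighbours_le:
  assumes "finite V" "finite S" "\<forall>e\<in>S. \<exists>x y. e = {x, y}"
  shows "(\<Sum>u\<in>V. card {w\<in>V. {u, w} \<in> S}) \<le> 2 * card S"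
proof -
  have "card {w\<in>V. {u, w} \<in> S} \<le> card {e\<in>S. u \<in> e}" for u
    by (rule card_inj_on_le[where f = "\<lambda>w. {u, w}"])
      (use assms in \<open>auto simp: inj_on_def doubleton_eq_iff\<close>)
  then have "(\<Sum>u\<in>V. card {w\<in>V. {u, w} \<in> S}) \<le> (\<Sum>u\<in>V. card {e\<in>S. u \<in> e})"
    by (rule sum_mono)
  also have "\<dots> = (\<Sum>e\<in>S. card {u\<in>V. u \<in> e})"
    using sum.swap_restrict[OF assms(1,2), of "\<lambda>_ _. 1::nat" "\<lambda>u e. u \<in> e"] by simp
  also have "\<dots> \<le> (\<Sum>e\<in>S. 2)"
  proof (rule sum_mono)
    fix e assume "e \<in> S"
    then obtain x y where e: "e = {x, y}" using assms by blast
    have "card {u\<in>V. u \<in> e} \<le> card e" by (rule card_mono) (auto simp: e)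
    also have "\<dots> \<le> 2" by (simp add: e card_insert_if)
    finally show "card {u\<in>V. u \<in> e} \<le> 2" .
  qed
  finally show ?thesis by simp
qed

lemma sum_sum_if_symmetric:
  fixes f :: "'a \<Rightarrow> 'b::comm_semiring_1"
  assumes "\<And>u v. P u v \<longleftrightarrow> P v u"
  shows "(\<Sum>u\<in>A. \<Sum>v\<in>A. if P u v then f u + f v else 0)
    = 2 * (\<Sum>u\<in>A. of_nat (card {v\<in>A. P u v}) * f u)"
proof (cases "finite A")
  case True
  have "(if P u v then f u + f v else 0) = (if P u v then f u else 0) + (if P u v then f v else 0)"
    for u v by simp
  then have "(\<Sum>u\<in>A. \<Sum>v\<in>A. if P u v then f u + f v else 0)
      = (\<Sum>u\<in>A. \<Sum>v\<in>A. if P u v then f u else 0) + (\<Sum>u\<in>A. \<Sum>v\<in>A. if P u v then f v else 0)"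
    by (simp add: sum.distrib)
  also have "(\<Sum>u\<in>A. \<Sum>v\<in>A. if P u v then f v else 0) = (\<Sum>u\<in>A. \<Sum>v\<in>A. if P u v then f u else 0)"
    using assms by (subst sum.swap) simp
  finally show ?thesis
    using True by (simp add: mult_2 sum.If_cases Int_def conj_commute)
qed simp

lemma sum_sum_if_symmetric_le:
  fixes f :: "'a \<Rightarrow> real" and M :: real
  assumes "\<And>u v. P u v \<longleftrightarrow> P v u" "\<And>u. u \<in> A \<Longrightarrow> 0 \<le> f u"
    and "\<And>u. u \<in> A \<Longrightarrow> card {v\<in>A. P u v} \<le> M"
  shows "(\<Sum>u\<in>A. \<Sum>v\<in>A. if P u v then f u + f v else 0) \<le> 2 * M * (\<Sum>u\<in>A. f u)"
proof -
  have "(\<Sum>u\<in>A. of_nat (card {v\<in>A. P u v}) * f u) \<le> (\<Sum>u\<in>A. M * f u)"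
    using assms(2,3) by (intro sum_mono mult_right_mono) auto
  then show ?thesis
    unfolding sum_sum_if_symmetric[OF assms(1)] sum_distrib_left[symmetric] by simp
qed

lemma simple_edges_no_loop: "simple_edges V F \<Longrightarrow> {x} \<notin> F"
  by (auto simp: simple_edges_def doubleton_eq_iff)

lemma simple_edges_finite: "finite V \<Longrightarrow> simple_edges V F \<Longrightarrow> finite F"
  by (rule finite_subset[of F "Pow V"]) (auto simp: simple_edges_def)

lemma tdeg_diff_le:
  assumes "finite V"
  shows "\<bar>real (tdeg V E' u) - real (tdeg V E u)\<bar> \<le> real (card {w\<in>V. {u, w} \<in> sym_diff E E'})"
proof -
  have "{w\<in>V. ({w, u} \<in> E') \<noteq> ({w, u} \<in> E)} = {w\<in>V. {u, w} \<in> sym_diff E E'}"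
    by (auto simp: insert_commute)
  then show ?thesis
    using abs_card_Collect_diff_le[OF assms, of "\<lambda>w. {w, u} \<in> E'" "\<lambda>w. {w, u} \<in> E"]
    by (simp add: tdeg_def degree_def)
qed

lemma card_closed_neighbourhood_le_tdeg:
  assumes "finite V"
  shows "card {v\<in>V. {u, v} \<in> F \<or> u = v} \<le> tdeg V F u"
proof -
  have "card {v\<in>V. {u, v} \<in> F \<or> u = v} \<le> card (insert u {v\<in>V. {v, u} \<in> F})"
    using assms by (intro card_mono) (auto simp: insert_commute)
  also have "\<dots> \<le> Suc (card {v\<in>V. {v, u} \<in> F})"
    by (rule card_insert_le_m1) auto
  finally show ?thesis by (simp add: tdeg_def degree_def)
qed

lemma norm_adj_nonneg: "0 \<le> norm_adj V F u v"
  by (simp add: norm_adj_def adj_def)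

lemma norm_adj_le:
  fixes m :: real
  assumes "simple_edges V F" "0 < m" "m \<le> tdeg V F u" "m \<le> tdeg V F v"
  shows "norm_adj V F u v \<le> 1 / m"
proof -
  have "adj F u v + (if u = v then 1 else 0) \<le> 1"
    using simple_edges_no_loop[OF assms(1)] by (auto simp: adj_def)
  moreover have "m \<le> sqrt (tdeg V F u) * sqrt (tdeg V F v)"
    using assms mult_mono[of "sqrt m" "sqrt (tdeg V F u)" "sqrt m" "sqrt (tdeg V F v)"] by simp
  ultimately show ?thesis
    using assms(2) unfolding norm_adj_def by (intro frac_le) (auto simp: adj_def)
qed

lemma norm_adj_diff_unchanged_le:
  fixes m :: real
  assumes "simple_edges V E" "simple_edges V E'" "{u, v} \<in> E \<longleftrightarrow> {u, v} \<in> E'" "0 < m"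
    "m \<le> tdeg V E u" "m \<le> tdeg V E v" "m \<le> tdeg V E' u" "m \<le> tdeg V E' v"
  shows "\<bar>norm_adj V E' u v - norm_adj V E u v\<bar>
    \<le> (if {u, v} \<in> E \<or> u = v then
          \<bar>real (tdeg V E' u) - real (tdeg V E u)\<bar> + \<bar>real (tdeg V E' v) - real (tdeg V E v)\<bar>
         else 0) / (2 * m\<^sup>2)"
proof -
  define a where "a = adj E u v + (if u = v then 1 else 0)"
  have a: "a = (if {u, v} \<in> E \<or> u = v then 1 else 0)"
    using simple_edges_no_loop[OF assms(1)] by (auto simp: a_def adj_def)
  have "norm_adj V E' u v - norm_adj V E u v
      = a * (1 / (sqrt (tdeg V E' u) * sqrt (tdeg V E' v))
             - 1 / (sqrt (tdeg V E u) * sqrt (tdeg V E v)))"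
    using assms(3) by (simp add: norm_adj_def adj_def a_def right_diff_distrib)
  then show ?thesis
    using a assms(4-)
      abs_inverse_sqrt_mult_diff_le[of m "tdeg V E u" "tdeg V E' u" "tdeg V E v" "tdeg V E' v"]
    by simp
qed

lemma sum_card_changed_neighbours_le:
  assumes "finite V" "simple_edges V E" "simple_edges V E'"
  shows "(\<Sum>u\<in>V. real (card {w\<in>V. {u, w} \<in> sym_diff E E'})) \<le> 2 * card (sym_diff E E')"
proof -
  have "finite (sym_diff E E')"
    using simple_edges_finite[OF assms(1)] assms(2,3) by simp
  moreover have "\<forall>e\<in>sym_diff E E'. \<exists>x y. e = {x, y}"
    using assms(2,3) unfolding simple_edges_def by blast
  ultimately have "(\<Sum>u\<in>V. card {w\<in>V. {u, w} \<in> sym_diff E E'}) \<le> 2 * card (sym_diff E E')"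
    by (rule sum_card_neighbours_le[OF assms(1)])
  from of_nat_mono[OF this] show ?thesis by simp
qed

lemma sum_tdeg_diff_le:
  assumes "finite V" "simple_edges V E" "simple_edges V E'"
  shows "(\<Sum>u\<in>V. \<bar>real (tdeg V E' u) - real (tdeg V E u)\<bar>) \<le> 2 * card (sym_diff E E')"
  using sum_mono[of V, OF tdeg_diff_le[OF assms(1)]] sum_card_changed_neighbours_le[OF assms]
  by (rule order_trans)

lemma sum_closed_neighbourhood_tdeg_diff_le:
  fixes M :: real
  assumes "finite V" "V \<noteq> {}" "simple_edges V E" "simple_edges V E'"
    and tdeg_le: "\<And>u. u \<in> V \<Longrightarrow> tdeg V E u \<le> M"
  shows "(\<Sum>u\<in>V. \<Sum>v\<in>V. if {u, v} \<in> E \<or> u = v then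
      \<bar>real (tdeg V E' u) - real (tdeg V E u)\<bar> + \<bar>real (tdeg V E' v) - real (tdeg V E v)\<bar> else 0)
    \<le> 4 * M * card (sym_diff E E')"
proof -
  obtain w where "w \<in> V" using assms(2) by blast
  then have "0 \<le> M" using tdeg_le[of w] by linarith
  have "card {v\<in>V. {u, v} \<in> E \<or> u = v} \<le> M" if "u \<in> V" for u
    using card_closed_neighbourhood_le_tdeg[OF assms(1), of u E] tdeg_le[OF that]
    by (meson of_nat_le_iff order_trans)
  then have "(\<Sum>u\<in>V. \<Sum>v\<in>V. if {u, v} \<in> E \<or> u = v then
      \<bar>real (tdeg V E' u) - real (tdeg V E u)\<bar> + \<bar>real (tdeg V E' v) - real (tdeg V E v)\<bar> else 0)
    \<le> 2 * M * (\<Sum>u\<in>V. \<bar>real (tdeg V E' u) - real (tdeg V E u)\<bar>)"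
    by (intro sum_sum_if_symmetric_le) (auto simp: insert_commute)
  also have "\<dots> \<le> 2 * M * (2 * card (sym_diff E E'))"
    using sum_tdeg_diff_le[OF assms(1,3,4)] \<open>0 \<le> M\<close> by (intro mult_left_mono) auto
  finally show ?thesis by simp
qed

lemma norm_adj_diff_le:
  fixes m :: real
  assumes "simple_edges V E" "simple_edges V E'" "0 < m"
    "m \<le> tdeg V E u" "m \<le> tdeg V E v" "m \<le> tdeg V E' u" "m \<le> tdeg V E' v"
  shows "\<bar>norm_adj V E' u v - norm_adj V E u v\<bar>
    \<le> (if {u, v} \<in> sym_diff E E' then 1 / m else 0)
      + (if {u, v} \<in> E \<or> u = v then
          \<bar>real (tdeg V E' u) - real (tdeg V E u)\<bar> + \<bar>real (tdeg V E' v) - real (tdeg V E v)\<bar>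
         else 0) / (2 * m\<^sup>2)"
proof (cases "{u, v} \<in> sym_diff E E'")
  case True
  have "norm_adj V E u v \<le> 1 / m" "norm_adj V E' u v \<le> 1 / m"
    using norm_adj_le[OF assms(1,3)] norm_adj_le[OF assms(2,3)] assms(4-) by auto
  then have "\<bar>norm_adj V E' u v - norm_adj V E u v\<bar> \<le> 1 / m"
    using norm_adj_nonneg[of V E u v] norm_adj_nonneg[of V E' u v] by (simp add: abs_le_iff)
  then show ?thesis
    using True by (intro add_increasing2) simp_all
next
  case False
  then show ?thesis
    using norm_adj_diff_unchanged_le[OF assms(1,2) _ assms(3-)] by auto
qed

lemma spec_norm_norm_adj_diff_le:
  fixes m M :: real
  assumes "finite V" "V \<noteq> {}" "simple_edges V E" "simple_edges V E'" "0 < m"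
    and tdeg_ge: "\<And>u. u \<in> V \<Longrightarrow> m \<le> tdeg V E u \<and> m \<le> tdeg V E' u"
    and tdeg_le: "\<And>u. u \<in> V \<Longrightarrow> tdeg V E u \<le> M"
  shows "spec_norm V (\<lambda>u v. norm_adj V E' u v - norm_adj V E u v)
    \<le> 2 * (1 + M / m) * card (sym_diff E E') / m"
proof -
  define S where "S = sym_diff E E'"
  define \<delta> where "\<delta> u = \<bar>real (tdeg V E' u) - real (tdeg V E u)\<bar>" for u
  define P where "P u v \<longleftrightarrow> {u, v} \<in> E \<or> u = v" for u v
  have "(\<Sum>v\<in>V. if {u, v} \<in> S then 1 / m else 0) = real (card {w\<in>V. {u, w} \<in> S}) / m" for u
    using assms(1) by (simp add: sum.If_cases Int_def conj_commute)
  then have changed: "(\<Sum>u\<in>V. \<Sum>v\<in>V. if {u, v} \<in> S then 1 / m else 0) \<le> 2 * card S / m"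
    using sum_card_changed_neighbours_le[OF assms(1,3,4)] assms(5)
    by (simp add: S_def sum_divide_distrib[symmetric] divide_right_mono)
  have unchanged: "(\<Sum>u\<in>V. \<Sum>v\<in>V. if P u v then \<delta> u + \<delta> v else 0) \<le> 4 * M * card S"
    unfolding P_def \<delta>_def S_def by (rule sum_closed_neighbourhood_tdeg_diff_le[OF assms(1-4) tdeg_le])
  have "spec_norm V (\<lambda>u v. norm_adj V E' u v - norm_adj V E u v)
      \<le> (\<Sum>u\<in>V. \<Sum>v\<in>V. \<bar>norm_adj V E' u v - norm_adj V E u v\<bar>)"
    by (rule spec_norm_le_sum_abs[OF assms(1)])
  also have "\<dots> \<le> (\<Sum>u\<in>V. \<Sum>v\<in>V. (if {u, v} \<in> S then 1 / m else 0)
      + (if P u v then \<delta> u + \<delta> v else 0) / (2 * m\<^sup>2))"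
    using tdeg_ge unfolding S_def P_def \<delta>_def
    by (intro sum_mono norm_adj_diff_le[OF assms(3-5)]) auto
  also have "\<dots> = (\<Sum>u\<in>V. \<Sum>v\<in>V. if {u, v} \<in> S then 1 / m else 0)
      + (\<Sum>u\<in>V. \<Sum>v\<in>V. if P u v then \<delta> u + \<delta> v else 0) / (2 * m\<^sup>2)"
    by (simp add: sum.distrib sum_divide_distrib)
  also have "\<dots> \<le> 2 * card S / m + 4 * M * card S / (2 * m\<^sup>2)"
    using changed unchanged by (intro add_mono divide_right_mono) auto
  also have "\<dots> = 2 * (1 + M / m) * card S / m"
    using assms(5) by (simp add: field_simps power2_eq_square)
  finally show ?thesis by (simp add: S_def)
qed

theorem lemma5p3:
  fixes c :: real
  shows "\<exists>C::real. \<forall>(V::'a set) E E' (K::nat).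
     finite V \<and> V \<noteq> {} \<and> simple_edges V E \<and> simple_edges V E' \<and>
     card ((E - E') \<union> (E' - E)) \<le> K \<and>
     real (Max (tdeg V E ` V \<union> tdeg V E' ` V)) / real (Min (tdeg V E ` V \<union> tdeg V E' ` V)) \<le> c
     \<longrightarrow> spec_norm V (\<lambda>u v. norm_adj V E' u v - norm_adj V E u v)
           \<le> C * real K / real (Min (tdeg V E ` V \<union> tdeg V E' ` V))"
proof (intro exI[of _ "2 * (1 + c)"] allI impI, elim conjE)
  fix V :: "'a set" and E E' :: "'a set set" and K :: nat
  assume V: "finite V" "V \<noteq> {}" and simple: "simple_edges V E" "simple_edges V E'"
    and K: "card (sym_diff E E') \<le> K"
  define D where "D = tdeg V E ` V \<union> tdeg V E' ` V"
  assume ratio: "real (Max D) / real (Min D) \<le> c"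
  then have "0 \<le> c" by (rule order_trans[rotated]) simp
  have D: "finite D" "D \<noteq> {}" using V by (auto simp: D_def)
  have "0 < Min D" using Min_in[OF D] by (auto simp: D_def tdeg_def)
  have "spec_norm V (\<lambda>u v. norm_adj V E' u v - norm_adj V E u v)
      \<le> 2 * (1 + real (Max D) / real (Min D)) * card (sym_diff E E') / real (Min D)"
    using \<open>0 < Min D\<close> Min_le[OF D(1)] Max_ge[OF D(1)]
    by (intro spec_norm_norm_adj_diff_le V simple) (auto simp: D_def)
  also have "\<dots> \<le> 2 * (1 + c) * K / real (Min D)"
    using ratio K \<open>0 \<le> c\<close> by (intro divide_right_mono mult_mono) auto
  finally show "spec_norm V (\<lambda>u v. norm_adj V E' u v - norm_adj V E u v)
      \<le> 2 * (1 + c) * real K / real (Min (tdeg V E ` V \<union> tdeg V E' ` V))"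
    by (simp add: D_def)
qed

end
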